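(* Consider the network-interference setting and the conditional randomization test described in the context, and suppose the null hypothesis $H_0^{\mathrm{sp}}$ holds, i.e. in the outcome model $h\neq0$ and $g=0$. Then $$\mathbb{P}(\mathrm{pval}\le\alpha\mid\mathcal{I})\le\alpha\quad\text{for every }\alpha\in[0,1]\text{ and every }n>0,$$ where the randomness is with respect to the conditional randomization distribution $\mathbb{P}_n^{\mathcal{I}}$.
   Context: Units $i=1,\dots,n$ receive treatments $Z\in\{0,1\}^n$ from a known design $\mathbb{P}_n$. Potential outcomes: $Y_i(z)=\mu+b(X_i)+z_ih(X_i)+g(\mathbf{X},z_{-i})+\epsilon_i$, observed $Y_i=Y_i(Z)$, with covariates $X_i$, covariate matrix $\mathbf{X}$, $z_{-i}$ the vector $z$ without entry $i$, arbitrary functions $b,h,g$, and independent mean-zero noise with $\mathbb{E}(\epsilon_i\mid\mathbf{X})=0$. An adjacency matrix $\mathbf{A}\in\{0,1\}^{n\times n}$ is observed; $A_{i\cdot}$ is its $i$-th row. A set of focal units $\mathcal{I}\subset[n]$ is selected at random. Test: fit, on units $i\in\mathcal{I}$ only, a model $\mathcal{M}_0$ of $Y_i$ on $(Z_i,X_i)$ and a model $\mathcal{M}_1$ of $Y_i$ on $(Z_i,A_{i\cdot}^\top Z,\mathbf{X})$ (any ML models), and set $t_n(Y,Z,\mathbf{X};\mathbf{A})=\mathrm{CV}_{n,k}(\mathcal{M}_0)-\mathrm{CV}_{n,k}(\mathcal{M}_1)$ (difference of $k$-fold cross-validation squared losses). Let $T_n=t_n(Y,Z,\mathbf{X};\mathbf{A})$.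 Let $\mathbb{P}_n^{\mathcal{I}}(z)\propto\mathbb{1}\{z_{\mathcal{I}}=Z_{\mathcal{I}}\}\mathbb{P}_n(z)$, the design conditioned on the focal units' treatments equalling their realized values. Draw $Z^{(r)}$ i.i.d. from $\mathbb{P}_n^{\mathcal{I}}$, $r=1,\dots,R$, compute $t^{(r)}=t_n(Y,Z^{(r)},\mathbf{X};\mathbf{A})$, and set $\mathrm{pval}=\frac1{1+R}[\sum_r\mathbb{1}\{t^{(r)}>T_n\}+U(1+m_R)]$ with $U\sim\mathrm{Unif}[0,1]$ independent and $m_R=\sum_r\mathbb{1}\{t^{(r)}=T_n\}$. *)

theory Defs
  imports "HOL-Probability.Probability"
begin

definition valid_assign :: "nat \<Rightarrow> (nat \<Rightarrow> real) \<Rightarrow> bool" where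
  "valid_assign n z \<longleftrightarrow> (\<forall>i<n. z i \<in> {0,1}) \<and> (\<forall>i\<ge>n. z i = 0)"

text \<open>z with entry i removed (coded by setting it to 0).\<close>
definition drop_entry :: "nat \<Rightarrow> (nat \<Rightarrow> real) \<Rightarrow> (nat \<Rightarrow> real)" where
  "drop_entry i z = (\<lambda>j. if j = i then 0 else z j)"

definition pot_outcome ::
  "real \<Rightarrow> ('x \<Rightarrow> real) \<Rightarrow> ('x \<Rightarrow> real) \<Rightarrow> ((nat \<Rightarrow> 'x) \<Rightarrow> (nat \<Rightarrow> real) \<Rightarrow> real)
    \<Rightarrow> (nat \<Rightarrow> 'x) \<Rightarrow> (nat \<Rightarrow> real) \<Rightarrow> (nat \<Rightarrow> real) \<Rightarrow> nat \<Rightarrow> real" where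
  "pot_outcome \<mu> b h g X eps z i = \<mu> + b (X i) + z i * h (X i) + g X (drop_entry i z) + eps i"

definition exposure :: "nat \<Rightarrow> (nat \<Rightarrow> nat \<Rightarrow> real) \<Rightarrow> (nat \<Rightarrow> real) \<Rightarrow> nat \<Rightarrow> real" where
  "exposure n A z i = (\<Sum>j<n. A i j * z j)"

definition cv_loss ::
  "nat set \<Rightarrow> nat \<Rightarrow> (nat \<Rightarrow> nat) \<Rightarrow> (nat set \<Rightarrow> (nat \<Rightarrow> 'f) \<Rightarrow> (nat \<Rightarrow> real) \<Rightarrow> ('f \<Rightarrow> real))
    \<Rightarrow> (nat \<Rightarrow> 'f) \<Rightarrow> (nat \<Rightarrow> real) \<Rightarrow> real" where
  "cv_loss I k fold_of fit feat Y =
     (\<Sum>j<k. \<Sum>i\<in>{i\<in>I. fold_of i = j}.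
        (let train = {l\<in>I. fold_of l \<noteq> j}
         in (Y i - fit train (restrict feat train) (restrict Y train) (feat i))\<^sup>2)) / real (card I)"

definition test_stat ::
  "nat \<Rightarrow> nat set \<Rightarrow> nat \<Rightarrow> (nat \<Rightarrow> nat)
    \<Rightarrow> (nat set \<Rightarrow> (nat \<Rightarrow> real \<times> 'x) \<Rightarrow> (nat \<Rightarrow> real) \<Rightarrow> (real \<times> 'x \<Rightarrow> real))
    \<Rightarrow> (nat set \<Rightarrow> (nat \<Rightarrow> real \<times> real \<times> (nat \<Rightarrow> 'x)) \<Rightarrow> (nat \<Rightarrow> real)
          \<Rightarrow> (real \<times> real \<times> (nat \<Rightarrow> 'x) \<Rightarrow> real))
    \<Rightarrow> (nat \<Rightarrow> real) \<Rightarrow> (nat \<Rightarrow> real) \<Rightarrow> (nat \<Rightarrow> 'x) \<Rightarrow> (nat \<Rightarrow> nat \<Rightarrow> real) \<Rightarrow> real" where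
  "test_stat n I k fold_of fit0 fit1 Y z X A =
     cv_loss I k fold_of fit0 (\<lambda>i. (z i, X i)) Y
   - cv_loss I k fold_of fit1 (\<lambda>i. (z i, exposure n A z i, X)) Y"

definition cond_design :: "(nat \<Rightarrow> real) pmf \<Rightarrow> nat set \<Rightarrow> (nat \<Rightarrow> real) \<Rightarrow> (nat \<Rightarrow> real) pmf" where
  "cond_design D I Z = cond_pmf D {z. \<forall>i\<in>I. z i = Z i}"

definition crt_draws :: "(nat \<Rightarrow> real) pmf \<Rightarrow> nat set \<Rightarrow> nat
    \<Rightarrow> ((nat \<Rightarrow> real) \<times> (nat \<Rightarrow> (nat \<Rightarrow> real))) pmf" where
  "crt_draws D I R = do {
      Z \<leftarrow> D;
      Zs \<leftarrow> Pi_pmf {..<R} (\<lambda>_. 0) (\<lambda>_. cond_design D I Z);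
      return_pmf (Z, Zs) }"

definition crt_pval :: "nat \<Rightarrow> ((nat \<Rightarrow> real) \<Rightarrow> real) \<Rightarrow> (nat \<Rightarrow> real) \<Rightarrow> (nat \<Rightarrow> (nat \<Rightarrow> real)) \<Rightarrow> real \<Rightarrow> real" where
  "crt_pval R t Z Zs U =
     (real (card {r\<in>{..<R}. t (Zs r) > t Z})
      + U * (1 + real (card {r\<in>{..<R}. t (Zs r) = t Z}))) / (1 + real R)"

end

theory Submission
  imports Defs
begin

(* Under the null g = 0 the outcome of a focal unit depends on the assignment only through its
   own treatment, so the statistic is one fixed function on each class of assignments agreeing
   with Z on the focal set.  Conditionally on that class, the observed Z and the resampled
   Z^(1), ..., Z^(R) are i.i.d. draws from P_n^I, hence exchangeable.  For any R + 1 statistic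
   values, the probabilities (over U) that the randomized rank p-values of the R + 1 positions
   fall below alpha sum to at most (R + 1) alpha; by exchangeability each position, in particular
   the observed one, rejects with probability at most alpha. *)

definition clamp01 :: "real \<Rightarrow> real" where
  "clamp01 y = min 1 (max 0 y)"

(* The probability, over U uniform on [0, 1], that the randomized rank p-value
   (#{r. w j < w r} + U * #{r. w r = w j}) / |J| of position j is at most x / |J|. *)
definition rank_reject_prob :: "'i set \<Rightarrow> ('i \<Rightarrow> real) \<Rightarrow> real \<Rightarrow> 'i \<Rightarrow> real" where
  "rank_reject_prob J w x j =
     clamp01 ((x - real (card {r\<in>J. w j < w r})) / real (card {r\<in>J. w r = w j}))"

lemma sum_rank_reject_prob_le:
  assumes "finite J"
  shows "(\<Sum>j\<in>J. rank_reject_prob J w x j) \<le> max x 0"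
  using assms
proof (induction J arbitrary: x rule: finite_psubset_induct)
  case (psubset J)
  show ?case
  proof (cases "J = {}")
    case True
    then show ?thesis by simp
  next
    case False
    \<comment> \<open>Peel off the top level set M: its e positions jointly contribute min e (max x 0), and every
       other position sees e more values above it, i.e. a threshold lowered by e.\<close>
    define M where "M = {j\<in>J. w j = Max (w ` J)}"
    define e where "e = card M"
    have top: "w j \<le> Max (w ` J)" if "j \<in> J" for j
      using psubset.hyps that by simp
    have "Max (w ` J) \<in> w ` J"
      using False psubset.hyps by simp
    then have "M \<noteq> {}"
      by (auto simp: M_def)
    then have e_pos: "e > 0"
      using psubset.hyps by (simp add: e_def M_def card_gt_0_iff)
    have M_sub: "M \<subseteq> J" and rest_sub: "J - M \<subset> J"
      using \<open>M \<noteq> {}\<close> by (auto simp: M_def)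
    have on_M: "rank_reject_prob J w x j = clamp01 (x / e)" if "j \<in> M" for j
    proof -
      have above: "{r\<in>J. w j < w r} = {}" and level: "{r\<in>J. w r = w j} = M"
        using that top by (force simp: M_def)+
      show ?thesis
        unfolding rank_reject_prob_def above level e_def by simp
    qed
    have off_M: "rank_reject_prob J w x j = rank_reject_prob (J - M) w (x - e) j"
      if "j \<in> J - M" for j
    proof -
      have below: "w j < Max (w ` J)"
        using that top by (force simp: M_def)
      have "{r\<in>J. w j < w r} = M \<union> {r\<in>J - M. w j < w r}"
        using below by (auto simp: M_def)
      moreover have "card (M \<union> {r\<in>J - M. w j < w r}) = e + card {r\<in>J - M. w j < w r}"
        unfolding e_def using psubset.hyps M_sub
        by (intro card_Un_disjoint) (auto intro: finite_subset)
      ultimately have "card {r\<in>J. w j < w r} = e + card {r\<in>J - M. w j < w r}"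
        by simp
      moreover have "{r\<in>J. w r = w j} = {r\<in>J - M. w r = w j}"
        using below by (auto simp: M_def)
      ultimately show ?thesis by (simp add: rank_reject_prob_def algebra_simps)
    qed
    have "(\<Sum>j\<in>M. rank_reject_prob J w x j) = min e (max 0 x)"
      using e_pos by (simp add: on_M e_def[symmetric] clamp01_def min_def max_def field_simps)
    moreover have "(\<Sum>j\<in>J - M. rank_reject_prob J w x j) \<le> max (x - e) 0"
      using psubset.IH[OF rest_sub] by (simp add: off_M)
    moreover have "(\<Sum>j\<in>J. rank_reject_prob J w x j)
        = (\<Sum>j\<in>J - M. rank_reject_prob J w x j) + (\<Sum>j\<in>M. rank_reject_prob J w x j)"
      using sum.subset_diff[OF M_sub psubset.hyps] .
    ultimately show ?thesis by linarith
  qed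
qed

lemma rank_reject_prob_comp_bij:
  assumes h: "bij_betw h J J"
  shows "rank_reject_prob J (w \<circ> h) x j = rank_reject_prob J w x (h j)"
proof -
  have card_pull: "card {r\<in>J. P (h r)} = card {s\<in>J. P s}" for P
  proof -
    have "h ` {r\<in>J. P (h r)} = {s\<in>J. P s}"
      using h by (auto simp: bij_betw_def)
    moreover have "inj_on h {r\<in>J. P (h r)}"
      using h by (auto simp: bij_betw_def intro: inj_on_subset)
    ultimately show ?thesis by (metis card_image)
  qed
  show ?thesis
    unfolding rank_reject_prob_def o_def
    using card_pull[of "\<lambda>s. w (h j) < w s"] card_pull[of "\<lambda>s. w s = w (h j)"] by simp
qed

lemma rank_reject_prob_nonneg: "0 \<le> rank_reject_prob J w x j"
  by (simp add: rank_reject_prob_def clamp01_def)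

lemma nn_integral_rank_reject_prob_iid_le:
  fixes C :: "'a pmf" and t :: "'a \<Rightarrow> real"
  assumes J: "finite J" and j: "j \<in> J" and x: "0 \<le> x"
  shows "(\<integral>\<^sup>+V. rank_reject_prob J (t \<circ> V) x j \<partial>Pi_pmf J d (\<lambda>_. C)) \<le> x / card J"
proof -
  let ?P = "Pi_pmf J d (\<lambda>_. C)"
  let ?F = "\<lambda>i. \<integral>\<^sup>+V. rank_reject_prob J (t \<circ> V) x i \<partial>?P"
  have exchangeable: "?F i = ?F j" if i: "i \<in> J" for i
  proof -
    define h where "h r = (if r = i then j else if r = j then i else r)" for r
    have h_bij: "bij_betw h J J"
      by (rule bij_betwI[where g = h]) (use i j in \<open>auto simp: h_def\<close>)
    have perm: "map_pmf (\<lambda>V. V \<circ> h) ?P = ?P"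
      by (rule Pi_pmf_bij_betw[OF J h_bij, symmetric]) (use i j in \<open>auto simp: h_def\<close>)
    have "?F i = (\<integral>\<^sup>+V. rank_reject_prob J (t \<circ> V) x i \<partial>map_pmf (\<lambda>V. V \<circ> h) ?P)"
      by (simp only: perm)
    also have "\<dots> = (\<integral>\<^sup>+V. rank_reject_prob J (t \<circ> V \<circ> h) x i \<partial>?P)"
      by (simp add: comp_assoc)
    also have "\<dots> = ?F j"
      using h_bij by (simp add: rank_reject_prob_comp_bij h_def)
    finally show ?thesis .
  qed
  have "ennreal (card J) * ?F j = (\<Sum>i\<in>J. ?F i)"
    using exchangeable by (simp add: ennreal_of_nat_eq_real_of_nat)
  also have "\<dots> = (\<integral>\<^sup>+V. (\<Sum>i\<in>J. ennreal (rank_reject_prob J (t \<circ> V) x i)) \<partial>?P)"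
    by (rule nn_integral_sum[symmetric]) simp
  also have "\<dots> = (\<integral>\<^sup>+V. (\<Sum>i\<in>J. rank_reject_prob J (t \<circ> V) x i) \<partial>?P)"
    by (simp add: sum_ennreal rank_reject_prob_nonneg)
  also have "\<dots> \<le> (\<integral>\<^sup>+V. x \<partial>?P)"
    using sum_rank_reject_prob_le[OF J, of "t \<circ> _" x] x
    by (intro nn_integral_mono ennreal_leI) (simp add: max_absorb1)
  also have "\<dots> = ennreal (card J) * ennreal (x / card J)"
    using j J x by (auto simp: measure_pmf.emeasure_space_1 ennreal_mult'[symmetric] card_gt_0_iff)
  finally show ?thesis
    using j J by (subst (asm) ennreal_mult_le_mult_iff) (auto simp: card_gt_0_iff)
qed

lemma emeasure_uniform_unit_atMost:
  "emeasure (uniform_measure lborel {0..1::real}) {U. U \<le> y} = clamp01 y"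
proof -
  have "{0..1::real} \<inter> {U. U \<le> y} = {0..min 1 y}" by auto
  then show ?thesis
    by (simp add: emeasure_lborel_Icc_eq clamp01_def divide_ennreal_def)
qed

definition crt_reject_prob ::
    "nat \<Rightarrow> ((nat \<Rightarrow> real) \<Rightarrow> real) \<Rightarrow> (nat \<Rightarrow> real) \<Rightarrow> (nat \<Rightarrow> nat \<Rightarrow> real) \<Rightarrow> real \<Rightarrow> ennreal"
  where "crt_reject_prob R t Z Zs \<alpha> = emeasure (uniform_measure lborel {0..1}) {U. crt_pval R t Z Zs U \<le> \<alpha>}"

lemma crt_reject_prob_eq_rank_reject_prob:
  "crt_reject_prob R t Z Zs \<alpha> = rank_reject_prob {..R} (t \<circ> Zs(R := Z)) ((1 + real R) * \<alpha>) R"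
proof -
  let ?gt = "card {r\<in>{..<R}. t Z < t (Zs r)}"
  let ?eq = "card {r\<in>{..<R}. t (Zs r) = t Z}"
  have "crt_pval R t Z Zs U \<le> \<alpha> \<longleftrightarrow> U \<le> ((1 + real R) * \<alpha> - ?gt) / (1 + ?eq)" for U
    unfolding crt_pval_def by (simp add: pos_divide_le_eq pos_le_divide_eq algebra_simps)
  moreover have "{r\<in>{..R}. t Z < (t \<circ> Zs(R := Z)) r} = {r\<in>{..<R}. t Z < t (Zs r)}"
    by (auto simp: le_less)
  moreover have "{r\<in>{..R}. (t \<circ> Zs(R := Z)) r = t Z} = insert R {r\<in>{..<R}. t (Zs r) = t Z}"
    by (auto simp: le_less)
  ultimately show ?thesis
    by (simp add: crt_reject_prob_def rank_reject_prob_def emeasure_uniform_unit_atMost add.commute)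
qed

lemma crt_reject_prob_iid_le:
  fixes C :: "(nat \<Rightarrow> real) pmf"
  assumes "0 \<le> \<alpha>"
  shows "(\<integral>\<^sup>+Z. \<integral>\<^sup>+Zs. crt_reject_prob R t Z Zs \<alpha> \<partial>Pi_pmf {..<R} d (\<lambda>_. C) \<partial>C) \<le> \<alpha>"
proof -
  have "Pi_pmf {..R} d (\<lambda>_. C) = map_pmf (\<lambda>(Z, Zs). Zs(R := Z)) (pair_pmf C (Pi_pmf {..<R} d (\<lambda>_. C)))"
    unfolding lessThan_Suc_atMost[symmetric] lessThan_Suc by (rule Pi_pmf_insert) auto
  then have "(\<integral>\<^sup>+Z. \<integral>\<^sup>+Zs. crt_reject_prob R t Z Zs \<alpha> \<partial>Pi_pmf {..<R} d (\<lambda>_. C) \<partial>C)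
      = (\<integral>\<^sup>+V. rank_reject_prob {..R} (t \<circ> V) ((1 + real R) * \<alpha>) R \<partial>Pi_pmf {..R} d (\<lambda>_. C))"
    by (simp add: crt_reject_prob_eq_rank_reject_prob nn_integral_pair_pmf')
  also have "\<dots> \<le> (1 + real R) * \<alpha> / card {..R}"
    using assms by (intro nn_integral_rank_reject_prob_iid_le) auto
  finally show ?thesis by simp
qed

lemma bind_cond_design: "bind_pmf D (cond_design D I) = D"
  unfolding cond_design_def
  by (rule bind_cond_pmf_cancel) (auto intro: arg_cong[where f = "measure D"])

lemma set_pmf_cond_design:
  assumes "Z \<in> set_pmf D"
  shows "set_pmf (cond_design D I Z) = set_pmf D \<inter> {z. \<forall>i\<in>I. z i = Z i}"
  unfolding cond_design_def using assms by (subst set_cond_pmf) auto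

lemma cond_design_cong:
  assumes "\<forall>i\<in>I. Z i = Z' i"
  shows "cond_design D I Z = cond_design D I Z'"
  unfolding cond_design_def using assms by metis

lemma crt_reject_prob_le_of_invariant:
  assumes \<alpha>: "0 \<le> \<alpha>"
    and invariant: "\<And>Z Z'. \<forall>i\<in>I. Z i = Z' i \<Longrightarrow> T Z = T Z'"
  shows "(\<integral>\<^sup>+(Z, Zs). crt_reject_prob R (T Z) Z Zs \<alpha> \<partial>crt_draws D I R) \<le> \<alpha>"
proof -
  let ?C = "cond_design D I"
  let ?G = "\<lambda>Z. \<integral>\<^sup>+Zs. crt_reject_prob R (T Z) Z Zs \<alpha> \<partial>Pi_pmf {..<R} (\<lambda>_. 0) (\<lambda>_. ?C Z)"
  have "(\<integral>\<^sup>+(Z, Zs). crt_reject_prob R (T Z) Z Zs \<alpha> \<partial>crt_draws D I R) = (\<integral>\<^sup>+Z. ?G Z \<partial>D)"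
    by (simp add: crt_draws_def)
  also have "\<dots> = (\<integral>\<^sup>+Z'. \<integral>\<^sup>+Z. ?G Z \<partial>?C Z' \<partial>D)"
    by (subst (1) bind_cond_design[symmetric]) simp
  also have "\<dots> \<le> (\<integral>\<^sup>+Z'. \<alpha> \<partial>D)"
  proof (intro nn_integral_mono_AE, unfold AE_measure_pmf_iff, intro ballI)
    fix Z' assume Z': "Z' \<in> set_pmf D"
    have "(\<integral>\<^sup>+Z. ?G Z \<partial>?C Z')
        = (\<integral>\<^sup>+Z. \<integral>\<^sup>+Zs. crt_reject_prob R (T Z') Z Zs \<alpha> \<partial>Pi_pmf {..<R} (\<lambda>_. 0) (\<lambda>_. ?C Z') \<partial>?C Z')"
    proof (intro nn_integral_cong_AE, unfold AE_measure_pmf_iff, intro ballI)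
      fix Z assume "Z \<in> set_pmf (?C Z')"
      then have "\<forall>i\<in>I. Z i = Z' i"
        using set_pmf_cond_design[OF Z'] by auto
      then show "?G Z = (\<integral>\<^sup>+Zs. crt_reject_prob R (T Z') Z Zs \<alpha> \<partial>Pi_pmf {..<R} (\<lambda>_. 0) (\<lambda>_. ?C Z'))"
        by (simp add: invariant[of Z Z'] cond_design_cong[of I Z Z'])
    qed
    also have "\<dots> \<le> \<alpha>"
      using \<alpha> by (rule crt_reject_prob_iid_le)
    finally show "(\<integral>\<^sup>+Z. ?G Z \<partial>?C Z') \<le> \<alpha>" .
  qed
  also have "\<dots> = \<alpha>"
    by (simp add: measure_pmf.emeasure_space_1)
  finally show ?thesis .
qed

lemma crt_pval_event_measurable:
  "{((Z, Zs), U). crt_pval R (T Z) Z Zs U \<le> \<alpha>}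
     \<in> sets (measure_pmf M \<Otimes>\<^sub>M uniform_measure lborel {0..1})"
proof -
  let ?N = "uniform_measure lborel {0..1::real}"
  have [measurable]: "(\<lambda>p. f (fst p)) \<in> borel_measurable (measure_pmf M \<Otimes>\<^sub>M ?N)" for f :: "_ \<Rightarrow> real"
    by (rule measurable_compose[OF measurable_fst]) simp
  have [measurable]: "snd \<in> borel_measurable (measure_pmf M \<Otimes>\<^sub>M ?N)"
    by (rule measurable_snd'') (simp add: measurable_cong_sets[OF sets_uniform_measure refl])
  have "{((Z, Zs), U). crt_pval R (T Z) Z Zs U \<le> \<alpha>}
      = {p \<in> space (measure_pmf M \<Otimes>\<^sub>M ?N).
           crt_pval R (T (fst (fst p))) (fst (fst p)) (snd (fst p)) (snd p) \<le> \<alpha>}"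
    by (auto simp: space_pair_measure)
  also have "\<dots> \<in> sets (measure_pmf M \<Otimes>\<^sub>M ?N)"
    unfolding crt_pval_def by measurable
  finally show ?thesis .
qed

lemma cv_loss_cong:
  assumes "\<forall>i\<in>I. Y i = Y' i"
  shows "cv_loss I k fold_of fit feat Y = cv_loss I k fold_of fit feat Y'"
proof -
  have "restrict Y {l\<in>I. fold_of l \<noteq> j} = restrict Y' {l\<in>I. fold_of l \<noteq> j}" for j
    using assms by (auto simp: restrict_def)
  then show ?thesis
    unfolding cv_loss_def Let_def using assms by (intro arg_cong2[where f = "(/)"] sum.cong) auto
qed

lemma test_stat_cong:
  assumes "\<forall>i\<in>I. Y i = Y' i"
  shows "test_stat n I k fold_of fit0 fit1 Y z X A = test_stat n I k fold_of fit0 fit1 Y' z X A"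
  unfolding test_stat_def by (simp only: cv_loss_cong[OF assms])

theorem theorem3:
  fixes n :: nat and D :: "(nat \<Rightarrow> real) pmf" and I :: "nat set"
    and \<mu> :: real and b h :: "'x \<Rightarrow> real"
    and g :: "(nat \<Rightarrow> 'x) \<Rightarrow> (nat \<Rightarrow> real) \<Rightarrow> real"
    and X :: "nat \<Rightarrow> 'x" and eps :: "nat \<Rightarrow> real"
    and A :: "nat \<Rightarrow> nat \<Rightarrow> real"
    and k :: nat and fold_of :: "nat \<Rightarrow> nat"
    and fit0 :: "nat set \<Rightarrow> (nat \<Rightarrow> real \<times> 'x) \<Rightarrow> (nat \<Rightarrow> real) \<Rightarrow> (real \<times> 'x \<Rightarrow> real)"
    and fit1 :: "nat set \<Rightarrow> (nat \<Rightarrow> real \<times> real \<times> (nat \<Rightarrow> 'x)) \<Rightarrow> (nat \<Rightarrow> real)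
                   \<Rightarrow> (real \<times> real \<times> (nat \<Rightarrow> 'x) \<Rightarrow> real)"
    and R :: nat and \<alpha> :: real
  assumes n_pos: "n > 0"
    and design: "\<forall>z\<in>set_pmf D. valid_assign n z"
    and adjacency: "\<forall>i j. A i j \<in> {0, 1}"
    and focal: "I \<subseteq> {..<n}"
    and folds: "\<forall>i\<in>I. fold_of i < k"
    and null_h: "h \<noteq> (\<lambda>_. 0)"
    and null_g: "g = (\<lambda>_ _. 0)"
    and alpha: "0 \<le> \<alpha>" "\<alpha> \<le> 1"
  shows "measure (measure_pmf (crt_draws D I R) \<Otimes>\<^sub>M uniform_measure lborel {0..1})
           {((Z, Zs), U).
              crt_pval R
                (\<lambda>z. test_stat n I k fold_of fit0 fit1
                        (\<lambda>i. pot_outcome \<mu> b h g X eps Z i) z X A)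
                Z Zs U \<le> \<alpha>} \<le> \<alpha>"
proof -
  let ?T = "\<lambda>Z z. test_stat n I k fold_of fit0 fit1 (\<lambda>i. pot_outcome \<mu> b h g X eps Z i) z X A"
  let ?N = "uniform_measure lborel {0..1::real}"
  let ?S = "{((Z, Zs), U). crt_pval R (?T Z) Z Zs U \<le> \<alpha>}"
  have invariant: "?T Z = ?T Z'" if agree: "\<forall>i\<in>I. Z i = Z' i" for Z Z'
  proof -
    have "\<forall>i\<in>I. pot_outcome \<mu> b h g X eps Z i = pot_outcome \<mu> b h g X eps Z' i"
      using agree by (simp add: null_g pot_outcome_def)
    then show ?thesis
      by (intro ext test_stat_cong)
  qed
  interpret N: prob_space ?N
    by (rule prob_space_uniform_measure) auto
  have "emeasure (measure_pmf (crt_draws D I R) \<Otimes>\<^sub>M ?N) ?S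
      = (\<integral>\<^sup>+w. emeasure ?N (Pair w -` ?S) \<partial>crt_draws D I R)"
    by (rule N.emeasure_pair_measure_alt[OF crt_pval_event_measurable])
  also have "\<dots> = (\<integral>\<^sup>+(Z, Zs). crt_reject_prob R (?T Z) Z Zs \<alpha> \<partial>crt_draws D I R)"
    by (intro nn_integral_cong) (simp add: crt_reject_prob_def vimage_def split_beta)
  also have "\<dots> \<le> \<alpha>"
    using alpha(1) invariant by (rule crt_reject_prob_le_of_invariant)
  finally show ?thesis
    unfolding measure_def using alpha(1) by (intro enn2real_leI)
qed

end
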